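(* Let $K\ge2$, $0<q<p$ with $p+(K-1)q=1$, and $\phi\in\Delta$. Suppose $\theta,\theta'\in\Delta$ differ only at two positions $j,k$, where $a:=\theta_j=\theta'_k<b:=\theta_k=\theta'_j$, and suppose $\phi_j<\phi_k$. Then $D_{KL}(\phi,\mathcal{M}(\theta))<D_{KL}(\phi,\mathcal{M}(\theta'))$.
   Context: $\Delta=\{\theta\in\mathbb{R}^K:\theta_i\ge0,\sum_i\theta_i=1\}$. $\mathcal{M}(\theta)_y=q+(p-q)\theta_y$. $D_{KL}(\phi,\psi)=\sum_i\phi_i\log(\phi_i/\psi_i)$ with $0\log(0/\cdot)=0$. *)

theory Defs
  imports "HOL-Analysis.Analysis"
begin

text \<open>Indices are 0..K-1; vectors are functions nat => real restricted to {..<K}.\<close>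

definition prob_simplex :: "nat \<Rightarrow> (nat \<Rightarrow> real) set" where
  "prob_simplex K = {\<theta>. (\<forall>i<K. \<theta> i \<ge> 0) \<and> (\<Sum>i<K. \<theta> i) = 1}"

definition mech :: "real \<Rightarrow> real \<Rightarrow> (nat \<Rightarrow> real) \<Rightarrow> nat \<Rightarrow> real" where
  "mech p q \<theta> y = q + (p - q) * \<theta> y"

definition KL :: "nat \<Rightarrow> (nat \<Rightarrow> real) \<Rightarrow> (nat \<Rightarrow> real) \<Rightarrow> real" where
  "KL K \<phi> \<psi> = (\<Sum>i<K. if \<phi> i = 0 then 0 else \<phi> i * ln (\<phi> i / \<psi> i))"

end

theory Submission
  imports Defs
begin

text \<open>Only the cross-entropy term of the divergence depends on \<open>\<theta>\<close>, and swapping the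
  entries \<open>j\<close>, \<open>k\<close> of \<open>\<theta>\<close> changes it by \<open>(\<phi> k - \<phi> j) (ln B - ln A)\<close>, where
  \<open>A < B\<close> are the two swapped entries of \<open>\<M>(\<theta>)\<close>. This is positive precisely when the larger
  mass of \<open>\<phi>\<close> is matched with the larger entry, so \<open>\<theta>\<close> is the better fit.\<close>

lemma KL_eq_entropy_diff:
  assumes "\<And>i. i < K \<Longrightarrow> \<psi> i > 0" and "\<And>i. i < K \<Longrightarrow> \<phi> i \<ge> 0"
  shows "KL K \<phi> \<psi> =
    (\<Sum>i<K. if \<phi> i = 0 then 0 else \<phi> i * ln (\<phi> i)) - (\<Sum>i<K. \<phi> i * ln (\<psi> i))"
proof -
  have "KL K \<phi> \<psi> = (\<Sum>i<K. (if \<phi> i = 0 then 0 else \<phi> i * ln (\<phi> i)) - \<phi> i * ln (\<psi> i))"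
    unfolding KL_def
  proof (rule sum.cong[OF refl])
    fix i assume "i \<in> {..<K}"
    then have "\<psi> i > 0" "\<phi> i \<ge> 0" using assms by auto
    then show "(if \<phi> i = 0 then 0 else \<phi> i * ln (\<phi> i / \<psi> i)) =
      (if \<phi> i = 0 then 0 else \<phi> i * ln (\<phi> i)) - \<phi> i * ln (\<psi> i)"
      by (auto simp: ln_div algebra_simps)
  qed
  then show ?thesis by (simp add: sum_subtractf)
qed

lemma sum_mult_transposition_diff:
  fixes w u v :: "nat \<Rightarrow> real"
  assumes "j < K" and "k < K" and "j \<noteq> k"
    and "\<And>i. i < K \<Longrightarrow> i \<noteq> j \<Longrightarrow> i \<noteq> k \<Longrightarrow> u i = v i"
    and "u j = v k" and "u k = v j"
  shows "(\<Sum>i<K. w i * u i) - (\<Sum>i<K. w i * v i) = (w k - w j) * (u k - u j)"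
proof -
  have "(\<Sum>i<K. w i * u i) - (\<Sum>i<K. w i * v i) = (\<Sum>i<K. w i * (u i - v i))"
    by (simp add: sum_subtractf right_diff_distrib)
  also have "\<dots> = (\<Sum>i\<in>{j, k}. w i * (u i - v i))"
    using assms(1-4) by (intro sum.mono_neutral_right) auto
  also have "\<dots> = (w k - w j) * (u k - u j)"
    using assms(3,5,6) by (simp add: algebra_simps)
  finally show ?thesis .
qed

lemma mech_pos:
  assumes "0 < q" and "q \<le> p" and "\<theta> y \<ge> 0"
  shows "mech p q \<theta> y > 0"
  using assms by (simp add: mech_def add_pos_nonneg)

lemma mech_strict_mono:
  assumes "q < p" and "\<theta> y < \<theta> z"
  shows "mech p q \<theta> y < mech p q \<theta> z"
  using assms by (simp add: mech_def)

theorem lemma1: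
  fixes K j k :: nat and p q a b :: real and \<phi> \<theta> \<theta>' :: "nat \<Rightarrow> real"
  assumes "K \<ge> 2" and "0 < q" and "q < p" and "p + (real K - 1) * q = 1"
    and "\<phi> \<in> prob_simplex K" and "\<theta> \<in> prob_simplex K" and "\<theta>' \<in> prob_simplex K"
    and "j < K" and "k < K" and "j \<noteq> k"
    and "\<And>i. i < K \<Longrightarrow> i \<noteq> j \<Longrightarrow> i \<noteq> k \<Longrightarrow> \<theta> i = \<theta>' i"
    and "a = \<theta> j" and "a = \<theta>' k" and "b = \<theta> k" and "b = \<theta>' j" and "a < b"
    and "\<phi> j < \<phi> k"
  shows "KL K \<phi> (mech p q \<theta>) < KL K \<phi> (mech p q \<theta>')"
proof -
  have mech_pos_on: "mech p q t i > 0" if "t \<in> prob_simplex K" "i < K" for t i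
    using that assms(2,3) by (intro mech_pos) (auto simp: prob_simplex_def)
  have "\<phi> i \<ge> 0" if "i < K" for i
    using that assms(5) by (auto simp: prob_simplex_def)
  then have KL_eq: "KL K \<phi> (mech p q t) =
      (\<Sum>i<K. if \<phi> i = 0 then 0 else \<phi> i * ln (\<phi> i)) - (\<Sum>i<K. \<phi> i * ln (mech p q t i))"
    if "t \<in> prob_simplex K" for t
    using that mech_pos_on by (intro KL_eq_entropy_diff) auto
  have "mech p q \<theta> j < mech p q \<theta> k"
    using assms(3,12,14,16) by (intro mech_strict_mono) auto
  then have ln_less: "ln (mech p q \<theta> j) < ln (mech p q \<theta> k)"
    using mech_pos_on[OF assms(6,8)] by simp
  have "(\<Sum>i<K. \<phi> i * ln (mech p q \<theta> i)) - (\<Sum>i<K. \<phi> i * ln (mech p q \<theta>' i))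
      = (\<phi> k - \<phi> j) * (ln (mech p q \<theta> k) - ln (mech p q \<theta> j))"
    using assms(8-15) by (intro sum_mult_transposition_diff) (auto simp: mech_def)
  also have "\<dots> > 0"
    using ln_less assms(17) by simp
  finally show ?thesis
    using KL_eq[OF assms(6)] KL_eq[OF assms(7)] by simp
qed

end
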